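(* Assume $R_1(i)\neq 0$ for $2\le i\le I-1$, $R_2(j)\neq0$ for $2\le j\le J-1$, and that the real parameters $\alpha,\beta$ satisfy $(\alpha+1)R_1(I-1)+(\eta_1-\epsilon_1)\neq0$ and $(\beta-1)R_2(2)+(\eta_2+\epsilon_2)\neq0$. Let $(e_1^m,e_2^m)_{m\ge0}$ be the error iterates of the implicit Schwarz iteration with the Robin-type (optimized) interface condition defined below. Then, with $$\bar\rho=-\frac{(\alpha+1)(\eta_2+\epsilon_2)-R_2(2)}{(\alpha+1)R_1(I-1)+\eta_1-\epsilon_1}\cdot\frac{(\beta-1)(\eta_1-\epsilon_1)-R_1(I-1)}{(\beta-1)R_2(2)+\eta_2+\epsilon_2},$$ one has, for every $m\ge1$, $e_{1,i}^{m+2}=\bar\rho\,e_{1,i}^m$ for all $1\le i\le I$ and $e_{2,j}^{m+2}=\bar\rho\,e_{2,j}^m$ for all $1\le j\le J$.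
   Context: Setting (implicit scheme, constant coefficients). Integers $I,J\ge3$; grid 1 has nodes $1,\dots,I$, grid 2 has nodes $1,\dots,J$, with node $I-1$ of grid 1 coinciding with node 1 of grid 2 and node $I$ of grid 1 coinciding with node 2 of grid 2. Real constants $\eta_k,\epsilon_k,\gamma_k$ ($k=1,2$). Define recursively $R_1(2)=1+2\epsilon_1+\gamma_1$, $R_1(i)=1+2\epsilon_1+\gamma_1+\dfrac{\eta_1^2-\epsilon_1^2}{R_1(i-1)}$ for $i=3,\dots,I-1$; $R_2(J-1)=1+2\epsilon_2+\gamma_2$, $R_2(j)=1+2\epsilon_2+\gamma_2+\dfrac{\eta_2^2-\epsilon_2^2}{R_2(j+1)}$ for $j=J-2,\dots,2$. Error iteration with optimized interface condition (parameters $\alpha,\beta\in\mathbb R$): $e_1^0\in\mathbb R^I$, $e_2^0\in\mathbb R^J$ arbitrary; for $m\ge1$: $e_{1,1}^m=0$; $-(\eta_1+\epsilon_1)e_{1,i-1}^m+(1+2\epsilon_1+\gamma_1)e_{1,i}^m+(\eta_1-\epsilon_1)e_{1,i+1}^m=0$ for $2\le i\le I-1$; $(e_{1,I}^m-e_{1,I-1}^m)+\alpha e_{1,I}^m=(e_{2,2}^{m-1}-e_{2,1}^{m-1})+\alpha e_{2,2}^{m-1}$; $e_{2,J}^m=0$; $-(\eta_2+\epsilon_2)e_{2,j-1}^m+(1+2\epsilon_2+\gamma_2)e_{2,j}^m+(\eta_2-\epsilon_2)e_{2,j+1}^m=0$ for $2\le j\le J-1$; $(e_{2,2}^m-e_{2,1}^m)+\beta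 e_{2,1}^m=(e_{1,I}^{m-1}-e_{1,I-1}^{m-1})+\beta e_{1,I-1}^{m-1}$. *)

theory Defs
  imports Complex_Main
begin

fun R1 :: "real \<Rightarrow> real \<Rightarrow> real \<Rightarrow> nat \<Rightarrow> real" where
  "R1 eta eps gam i =
     (if i \<le> 2 then 1 + 2*eps + gam
      else 1 + 2*eps + gam + (eta^2 - eps^2) / R1 eta eps gam (i - 1))"

text \<open>Backward recursion indexed by distance k = J-1-j from the right end.\<close>
fun R2aux :: "real \<Rightarrow> real \<Rightarrow> real \<Rightarrow> nat \<Rightarrow> real" where
  "R2aux eta eps gam 0 = 1 + 2*eps + gam"
| "R2aux eta eps gam (Suc k) = 1 + 2*eps + gam + (eta^2 - eps^2) / R2aux eta eps gam k"

definition R2 :: "real \<Rightarrow> real \<Rightarrow> real \<Rightarrow> nat \<Rightarrow> nat \<Rightarrow> real" where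
  "R2 eta eps gam J j = R2aux eta eps gam (J - 1 - j)"

end

theory Submission
  imports Defs
begin

text \<open>Eliminating the tridiagonal system from the Dirichlet end of each subdomain (Thomas
  algorithm) leaves one relation between the two unknowns next to the interface:
  \<open>R\<^sub>1(I-1) e\<^sub>1,I-1 + (\<eta>\<^sub>1-\<epsilon>\<^sub>1) e\<^sub>1,I = 0\<close> and \<open>R\<^sub>2(2) e\<^sub>2,2 = (\<eta>\<^sub>2+\<epsilon>\<^sub>2) e\<^sub>2,1\<close>.
  Substituted into the two Robin transmission conditions, these make the interface values
  reproduce themselves after two sweeps, multiplied by \<open>\<rho>\<close>. Then \<open>e\<^sup>m\<^sup>+\<^sup>2 - \<rho> e\<^sup>m\<close> solves the
  homogeneous subdomain problems with zero boundary and interface data, and the same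
  elimination shows that such a solution vanishes.\<close>

definition stencil_zero :: "real \<Rightarrow> real \<Rightarrow> real \<Rightarrow> (nat \<Rightarrow> real) \<Rightarrow> nat \<Rightarrow> bool" where
  "stencil_zero eta eps gam z i \<longleftrightarrow>
     - (eta + eps) * z (i - 1) + (1 + 2*eps + gam) * z i + (eta - eps) * z (i + 1) = 0"

lemma stencil_zero_diff_scaled:
  assumes "stencil_zero eta eps gam z i" and "stencil_zero eta eps gam w i"
  shows "stencil_zero eta eps gam (\<lambda>k. z k - r * w k) i"
proof -
  have "- (eta + eps) * (z (i - 1) - r * w (i - 1)) + (1 + 2*eps + gam) * (z i - r * w i)
          + (eta - eps) * (z (i + 1) - r * w (i + 1))
        = (- (eta + eps) * z (i - 1) + (1 + 2*eps + gam) * z i + (eta - eps) * z (i + 1))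
          - r * (- (eta + eps) * w (i - 1) + (1 + 2*eps + gam) * w i + (eta - eps) * w (i + 1))"
    by (simp add: algebra_simps)
  with assms show ?thesis
    unfolding stencil_zero_def by simp
qed

lemma R1_2: "R1 eta eps gam 2 = 1 + 2*eps + gam"
  by simp

lemma R1_Suc:
  "2 \<le> i \<Longrightarrow> R1 eta eps gam (Suc i) = 1 + 2*eps + gam + (eta^2 - eps^2) / R1 eta eps gam i"
  by simp

declare R1.simps[simp del]

lemma R2_last: "J \<ge> 1 \<Longrightarrow> R2 eta eps gam J (J - 1) = 1 + 2*eps + gam"
  by (simp add: R2_def)

lemma R2_step:
  "Suc j < J \<Longrightarrow>
     R2 eta eps gam J j = 1 + 2*eps + gam + (eta^2 - eps^2) / R2 eta eps gam J (Suc j)"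
proof -
  assume "Suc j < J"
  then have "J - 1 - j = Suc (J - 1 - Suc j)"
    by simp
  then show ?thesis
    by (simp add: R2_def)
qed

lemma R1_forward_elimination:
  fixes z :: "nat \<Rightarrow> real"
  assumes z1: "z 1 = 0"
    and rows: "\<And>i. 2 \<le> i \<Longrightarrow> i \<le> N \<Longrightarrow> stencil_zero eta eps gam z i"
    and nz: "\<And>i. 2 \<le> i \<Longrightarrow> i \<le> N \<Longrightarrow> R1 eta eps gam i \<noteq> 0"
    and i: "2 \<le> i" "i \<le> N"
  shows "R1 eta eps gam i * z i + (eta - eps) * z (i + 1) = 0"
  using i
proof (induction i rule: nat_induct_at_least)
  case base
  then show ?case
    using rows[of 2] z1 by (simp add: stencil_zero_def R1_2)
next
  case (Suc n)
  have prev: "R1 eta eps gam n * z n + (eta - eps) * z (Suc n) = 0"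
    using Suc by simp
  have rn: "R1 eta eps gam n \<noteq> 0"
    using nz Suc by simp
  have zn: "z n = - (eta - eps) * z (Suc n) / R1 eta eps gam n"
    using prev rn by (simp add: field_simps)
  have row: "- (eta + eps) * z n + (1 + 2*eps + gam) * z (Suc n) + (eta - eps) * z (Suc n + 1) = 0"
    using rows[of "Suc n"] Suc by (simp add: stencil_zero_def)
  show ?case
    using row rn unfolding R1_Suc[OF Suc.hyps] zn
    by (simp add: field_simps power2_eq_square)
qed

lemma R2_backward_elimination:
  fixes z :: "nat \<Rightarrow> real"
  assumes zJ: "z J = 0"
    and rows: "\<And>j. 2 \<le> j \<Longrightarrow> j \<le> J - 1 \<Longrightarrow> stencil_zero eta eps gam z j"
    and nz: "\<And>j. 2 \<le> j \<Longrightarrow> j \<le> J - 1 \<Longrightarrow> R2 eta eps gam J j \<noteq> 0"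
    and j: "2 \<le> j" "j \<le> J - 1"
  shows "R2 eta eps gam J j * z j - (eta + eps) * z (j - 1) = 0"
  using j(2)
proof (induction j rule: inc_induct)
  case base
  have "J - 1 + 1 = J" and last: "R2 eta eps gam J (J - 1) = 1 + 2*eps + gam"
    using j R2_last by auto
  then show ?case
    using rows[of "J - 1"] j zJ unfolding last by (simp add: stencil_zero_def algebra_simps)
next
  case (step n)
  have n: "2 \<le> n" "Suc n < J"
    using step j by auto
  have prev: "R2 eta eps gam J (Suc n) * z (Suc n) - (eta + eps) * z n = 0"
    using step by simp
  have rn: "R2 eta eps gam J (Suc n) \<noteq> 0"
    using nz n by simp
  have zn: "z (Suc n) = (eta + eps) * z n / R2 eta eps gam J (Suc n)"
    using prev rn by (simp add: field_simps)
  have row: "- (eta + eps) * z (n - 1) + (1 + 2*eps + gam) * z n + (eta - eps) * z (Suc n) = 0"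
    using rows[of n] n by (simp add: stencil_zero_def)
  show ?case
    using row rn unfolding R2_step[OF n(2)] zn
    by (simp add: field_simps power2_eq_square)
qed

lemma R1_forward_uniqueness:
  fixes z :: "nat \<Rightarrow> real"
  assumes z1: "z 1 = 0" and zI: "z I = 0"
    and rows: "\<And>i. 2 \<le> i \<Longrightarrow> i \<le> I - 1 \<Longrightarrow> stencil_zero eta eps gam z i"
    and nz: "\<And>i. 2 \<le> i \<Longrightarrow> i \<le> I - 1 \<Longrightarrow> R1 eta eps gam i \<noteq> 0"
    and i: "1 \<le> i" "i \<le> I"
  shows "z i = 0"
  using i(2)
proof (induction i rule: inc_induct)
  case base
  show ?case using zI .
next
  case (step n)
  show ?case
  proof (cases "n = 1")
    case True
    then show ?thesis using z1 by simp
  next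
    case False
    then have n: "2 \<le> n" "n \<le> I - 1"
      using i step by auto
    have "R1 eta eps gam n * z n = 0"
      using R1_forward_elimination[OF z1 rows nz n] step by simp
    then show ?thesis
      using nz[OF n] by simp
  qed
qed

lemma R2_backward_uniqueness:
  fixes z :: "nat \<Rightarrow> real"
  assumes z1: "z 1 = 0" and zJ: "z J = 0"
    and rows: "\<And>j. 2 \<le> j \<Longrightarrow> j \<le> J - 1 \<Longrightarrow> stencil_zero eta eps gam z j"
    and nz: "\<And>j. 2 \<le> j \<Longrightarrow> j \<le> J - 1 \<Longrightarrow> R2 eta eps gam J j \<noteq> 0"
    and j: "1 \<le> j" "j \<le> J"
  shows "z j = 0"
  using j
proof (induction j rule: nat_induct_at_least)
  case base
  show ?case using z1 .
next
  case (Suc n)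
  show ?case
  proof (cases "Suc n = J")
    case True
    then show ?thesis using zJ by simp
  next
    case False
    then have n: "2 \<le> Suc n" "Suc n \<le> J - 1"
      using Suc by auto
    have "R2 eta eps gam J (Suc n) * z (Suc n) = 0"
      using R2_backward_elimination[OF zJ rows nz n] Suc n by simp
    then show ?thesis
      using nz[OF n] by simp
  qed
qed

lemma R1_solutions_proportional:
  fixes z w :: "nat \<Rightarrow> real"
  assumes "z 1 = 0" and "w 1 = 0" and "z I = r * w I"
    and "\<And>i. 2 \<le> i \<Longrightarrow> i \<le> I - 1 \<Longrightarrow> stencil_zero eta eps gam z i"
    and "\<And>i. 2 \<le> i \<Longrightarrow> i \<le> I - 1 \<Longrightarrow> stencil_zero eta eps gam w i"
    and "\<And>i. 2 \<le> i \<Longrightarrow> i \<le> I - 1 \<Longrightarrow> R1 eta eps gam i \<noteq> 0"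
    and "1 \<le> i" "i \<le> I"
  shows "z i = r * w i"
proof -
  have "(\<lambda>k. z k - r * w k) i = 0"
    by (rule R1_forward_uniqueness) (use assms stencil_zero_diff_scaled in auto)
  then show ?thesis
    by simp
qed

lemma R2_solutions_proportional:
  fixes z w :: "nat \<Rightarrow> real"
  assumes "z 1 = r * w 1" and "z J = 0" and "w J = 0"
    and "\<And>j. 2 \<le> j \<Longrightarrow> j \<le> J - 1 \<Longrightarrow> stencil_zero eta eps gam z j"
    and "\<And>j. 2 \<le> j \<Longrightarrow> j \<le> J - 1 \<Longrightarrow> stencil_zero eta eps gam w j"
    and "\<And>j. 2 \<le> j \<Longrightarrow> j \<le> J - 1 \<Longrightarrow> R2 eta eps gam J j \<noteq> 0"
    and "1 \<le> j" "j \<le> J"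
  shows "z j = r * w j"
proof -
  have "(\<lambda>k. z k - r * w k) j = 0"
    by (rule R2_backward_uniqueness) (use assms stencil_zero_diff_scaled in auto)
  then show ?thesis
    by simp
qed

text \<open>The interface values: \<open>u, u'\<close> stand for \<open>e\<^sub>1,I, e\<^sub>1,I-1\<close> and \<open>v, v'\<close> for
  \<open>e\<^sub>2,1, e\<^sub>2,2\<close>; \<open>a = R\<^sub>1(I-1)\<close>, \<open>b = \<eta>\<^sub>1-\<epsilon>\<^sub>1\<close>, \<open>c = R\<^sub>2(2)\<close>, \<open>d = \<eta>\<^sub>2+\<epsilon>\<^sub>2\<close>.\<close>

lemma interface_values_two_step:
  fixes u u' v v' :: "nat \<Rightarrow> real" and a b c d \<alpha> \<beta> :: real
  assumes a: "a \<noteq> 0" and c: "c \<noteq> 0"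
    and A: "(\<alpha> + 1) * a + b \<noteq> 0" and B: "(\<beta> - 1) * c + d \<noteq> 0"
    and elim1: "\<And>n. n \<ge> 1 \<Longrightarrow> a * u' n + b * u n = 0"
    and elim2: "\<And>n. n \<ge> 1 \<Longrightarrow> c * v' n - d * v n = 0"
    and robin1: "\<And>n. n \<ge> 1 \<Longrightarrow> (u n - u' n) + \<alpha> * u n = (v' (n - 1) - v (n - 1)) + \<alpha> * v' (n - 1)"
    and robin2: "\<And>n. n \<ge> 1 \<Longrightarrow> (v' n - v n) + \<beta> * v n = (u (n - 1) - u' (n - 1)) + \<beta> * u' (n - 1)"
    and n: "n \<ge> 1"
  defines "\<rho> \<equiv> - (((\<alpha> + 1) * d - c) / ((\<alpha> + 1) * a + b)) * (((\<beta> - 1) * b - a) / ((\<beta> - 1) * c + d))"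
  shows "u (n + 2) = \<rho> * u n" and "v (n + 2) = \<rho> * v n"
proof -
  define X where "X = (\<alpha> + 1) * d - c"
  define Y where "Y = (\<beta> - 1) * b - a"
  define P where "P = ((\<alpha> + 1) * a + b) * ((\<beta> - 1) * c + d)"
  have "P \<noteq> 0"
    using A B unfolding P_def by simp
  have rho: "\<rho> = - (X * Y) / P"
    unfolding \<rho>_def X_def Y_def P_def by simp
  have scale: "q = \<rho> * p" if "P * q = - (X * Y * p)" for p q
  proof -
    have "q = - (X * Y * p) / P"
      using that \<open>P \<noteq> 0\<close> by (simp add: field_simps)
    then show ?thesis
      unfolding rho by simp
  qed
  have to_v: "c * ((\<alpha> + 1) * a + b) * u (k + 1) = a * X * v k" if "k \<ge> 1" for k
  proof -
    have "a * ((u (k + 1) - u' (k + 1)) + \<alpha> * u (k + 1))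
            = a * ((v' k - v k) + \<alpha> * v' k)"
      using robin1[of "k + 1"] by simp
    moreover have "a * u' (k + 1) + b * u (k + 1) = 0"
      using elim1 by simp
    ultimately show ?thesis
      using elim2[OF that] unfolding X_def by algebra
  qed
  have to_u: "a * ((\<beta> - 1) * c + d) * v (k + 1) = - c * Y * u k" if "k \<ge> 1" for k
  proof -
    have "c * ((v' (k + 1) - v (k + 1)) + \<beta> * v (k + 1))
            = c * ((u k - u' k) + \<beta> * u' k)"
      using robin2[of "k + 1"] by simp
    moreover have "c * v' (k + 1) - d * v (k + 1) = 0"
      using elim2 by simp
    ultimately show ?thesis
      using elim1[OF that] unfolding Y_def by algebra
  qed
  show "u (n + 2) = \<rho> * u n"
  proof (rule scale)
    have "a * c * (P * u (n + 2) + X * Y * u n) = 0"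
      using to_v[of "n + 1"] to_u[OF n] unfolding P_def by (simp add: numeral_2_eq_2) algebra
    then show "P * u (n + 2) = - (X * Y * u n)"
      using a c by (simp add: eq_neg_iff_add_eq_0)
  qed
  show "v (n + 2) = \<rho> * v n"
  proof (rule scale)
    have "a * c * (P * v (n + 2) + X * Y * v n) = 0"
      using to_u[of "n + 1"] to_v[OF n] unfolding P_def by (simp add: numeral_2_eq_2) algebra
    then show "P * v (n + 2) = - (X * Y * v n)"
      using a c by (simp add: eq_neg_iff_add_eq_0)
  qed
qed

theorem proposition4p2:
  fixes I J :: nat
    and eta1 eps1 gam1 eta2 eps2 gam2 \<alpha> \<beta> \<rho> :: real
    and e1 e2 :: "nat \<Rightarrow> nat \<Rightarrow> real"
  assumes I3: "I \<ge> 3" and J3: "J \<ge> 3"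
    and R1nz: "\<And>i. 2 \<le> i \<Longrightarrow> i \<le> I - 1 \<Longrightarrow> R1 eta1 eps1 gam1 i \<noteq> 0"
    and R2nz: "\<And>j. 2 \<le> j \<Longrightarrow> j \<le> J - 1 \<Longrightarrow> R2 eta2 eps2 gam2 J j \<noteq> 0"
    and A: "(\<alpha> + 1) * R1 eta1 eps1 gam1 (I - 1) + (eta1 - eps1) \<noteq> 0"
    and B: "(\<beta> - 1) * R2 eta2 eps2 gam2 J 2 + (eta2 + eps2) \<noteq> 0"
    and bc1: "\<And>m. m \<ge> 1 \<Longrightarrow> e1 m 1 = 0"
    and int1: "\<And>m i. m \<ge> 1 \<Longrightarrow> 2 \<le> i \<Longrightarrow> i \<le> I - 1 \<Longrightarrow>
        - (eta1 + eps1) * e1 m (i - 1) + (1 + 2*eps1 + gam1) * e1 m i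
          + (eta1 - eps1) * e1 m (i + 1) = 0"
    and if1: "\<And>m. m \<ge> 1 \<Longrightarrow>
        (e1 m I - e1 m (I - 1)) + \<alpha> * e1 m I
          = (e2 (m - 1) 2 - e2 (m - 1) 1) + \<alpha> * e2 (m - 1) 2"
    and bc2: "\<And>m. m \<ge> 1 \<Longrightarrow> e2 m J = 0"
    and int2: "\<And>m j. m \<ge> 1 \<Longrightarrow> 2 \<le> j \<Longrightarrow> j \<le> J - 1 \<Longrightarrow>
        - (eta2 + eps2) * e2 m (j - 1) + (1 + 2*eps2 + gam2) * e2 m j
          + (eta2 - eps2) * e2 m (j + 1) = 0"
    and if2: "\<And>m. m \<ge> 1 \<Longrightarrow>
        (e2 m 2 - e2 m 1) + \<beta> * e2 m 1
          = (e1 (m - 1) I - e1 (m - 1) (I - 1)) + \<beta> * e1 (m - 1) (I - 1)"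
    and rho: "\<rho> = - (((\<alpha> + 1) * (eta2 + eps2) - R2 eta2 eps2 gam2 J 2)
                     / ((\<alpha> + 1) * R1 eta1 eps1 gam1 (I - 1) + eta1 - eps1))
                 * (((\<beta> - 1) * (eta1 - eps1) - R1 eta1 eps1 gam1 (I - 1))
                     / ((\<beta> - 1) * R2 eta2 eps2 gam2 J 2 + eta2 + eps2))"
  shows "\<forall>m \<ge> 1. (\<forall>i. 1 \<le> i \<and> i \<le> I \<longrightarrow> e1 (m + 2) i = \<rho> * e1 m i)
                 \<and> (\<forall>j. 1 \<le> j \<and> j \<le> J \<longrightarrow> e2 (m + 2) j = \<rho> * e2 m j)"
proof (intro allI impI)
  fix m :: nat
  assume m: "m \<ge> 1"
  have rows1: "stencil_zero eta1 eps1 gam1 (e1 n) i" if "n \<ge> 1" "2 \<le> i" "i \<le> I - 1" for n i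
    using int1[OF that] unfolding stencil_zero_def .
  have rows2: "stencil_zero eta2 eps2 gam2 (e2 n) j" if "n \<ge> 1" "2 \<le> j" "j \<le> J - 1" for n j
    using int2[OF that] unfolding stencil_zero_def .
  have elim1: "R1 eta1 eps1 gam1 (I - 1) * e1 n (I - 1) + (eta1 - eps1) * e1 n I = 0" if "n \<ge> 1" for n
    using R1_forward_elimination[OF bc1[OF that] rows1[OF that] R1nz, where i="I - 1"] I3 by simp
  have elim2: "R2 eta2 eps2 gam2 J 2 * e2 n 2 - (eta2 + eps2) * e2 n 1 = 0" if "n \<ge> 1" for n
    using R2_backward_elimination[OF bc2[OF that] rows2[OF that] R2nz, where j=2] J3 by simp
  have pivots: "R1 eta1 eps1 gam1 (I - 1) \<noteq> 0" "R2 eta2 eps2 gam2 J 2 \<noteq> 0"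
    using R1nz R2nz I3 J3 by auto
  have rho': "\<rho> = - (((\<alpha> + 1) * (eta2 + eps2) - R2 eta2 eps2 gam2 J 2)
                  / ((\<alpha> + 1) * R1 eta1 eps1 gam1 (I - 1) + (eta1 - eps1)))
              * (((\<beta> - 1) * (eta1 - eps1) - R1 eta1 eps1 gam1 (I - 1))
                  / ((\<beta> - 1) * R2 eta2 eps2 gam2 J 2 + (eta2 + eps2)))"
    unfolding rho by (simp only: add_diff_eq add.assoc)
  note two_step = interface_values_two_step[where u="\<lambda>n. e1 n I" and u'="\<lambda>n. e1 n (I - 1)"
      and v="\<lambda>n. e2 n 1" and v'="\<lambda>n. e2 n 2", OF pivots A B elim1 elim2 if1 if2 m, folded rho']
  have iface: "e1 (m + 2) I = \<rho> * e1 m I" "e2 (m + 2) 1 = \<rho> * e2 m 1"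
    using two_step by simp_all
  show "(\<forall>i. 1 \<le> i \<and> i \<le> I \<longrightarrow> e1 (m + 2) i = \<rho> * e1 m i)
      \<and> (\<forall>j. 1 \<le> j \<and> j \<le> J \<longrightarrow> e2 (m + 2) j = \<rho> * e2 m j)"
  proof (intro allI impI conjI)
    show "e1 (m + 2) i = \<rho> * e1 m i" if "1 \<le> i \<and> i \<le> I" for i
      using R1_solutions_proportional[OF bc1 bc1[OF m] iface(1) rows1 rows1[OF m] R1nz] that
      by simp
    show "e2 (m + 2) j = \<rho> * e2 m j" if "1 \<le> j \<and> j \<le> J" for j
      using R2_solutions_proportional[OF iface(2) bc2 bc2[OF m] rows2 rows2[OF m] R2nz] that
      by simp
  qed
qed

end
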